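(* Let $(W,S)$, $\Gamma$, $L$ be as in the context and let $E\mapsto\tilde{a}_E$ be the function defined recursively there. Then for every $E\in\mathrm{Irr}(W)$ we have $\tilde a_E\ge\tilde a'_E\ge 0$ and $\tilde a_{E\otimes\mathrm{sgn}}-\tilde a_E=\omega_L(E)$. Moreover, if $J\subsetneqq S$, $M\in\mathrm{Irr}(W_J)$ and $E$ is an irreducible constituent of the representation induced from $M$, then $\tilde a_E\ge\tilde a_M$.
   Context: $(W,S)$ is a finite Coxeter group with length function $l$. $\Gamma$ is an abelian group with a total order $\le$ compatible with addition. $L\colon W\to\Gamma$ is a weight function: $L(ww')=L(w)+L(w')$ whenever $l(ww')=l(w)+l(w')$; assume $L(s)\ge 0$ for all $s\in S$. For $J\subseteq S$, $W_J$ is the parabolic subgroup generated by $J$ (a Coxeter group with generators $J$), and $L$ restricts to a weight function on it. $\mathrm{Irr}(W)$ is the set of complex irreducible representations of $W$; $\mathrm{sgn}$ is the sign representation. Let $S'\subseteq S$ be a set of representatives of the conjugacy classes of $W$ contained in $T=\{wsw^{-1}\}$, and $N_s$ the size of the class of $s$; set $\omega_L(E):=\sum_{s\in S'}\frac{N_s\,\mathrm{trace}(s,E)}{\dim E}L(s)\in\Gamma$ (these coefficients are integers). For $M\in\mathrm{Irr}(W_J)$, write $M\uparrow E$ if $E$ is a constituent of $\mathrm{Ind}_{W_J}^W M$. Definition of $\tilde a$ (recursively over parabolic subgroups): if $W=\{1\}$, $\tilde a_{1_W}:=0$. Otherwise, assuming $\tilde a$ defined for all $W_J$, $J\subsetneqq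 S$, set $\tilde a'_E:=\max\{\tilde a_M\mid M\in\mathrm{Irr}(W_J),\ J\subsetneqq S,\ M\uparrow E\}$, and $\tilde a_E:=\tilde a'_E$ if $\tilde a'_{E\otimes\mathrm{sgn}}-\tilde a'_E\le\omega_L(E)$, and $\tilde a_E:=\tilde a'_{E\otimes\mathrm{sgn}}-\omega_L(E)$ otherwise. *)

theory Defs
  imports "HOL-Algebra.Multiplicative_Group" "HOL-Algebra.Generated_Groups"
          "Jordan_Normal_Form.Matrix"
begin

definition wprod :: "('a, 'b) monoid_scheme \<Rightarrow> 'a list \<Rightarrow> 'a" where
  "wprod G ws = foldr (\<lambda>x y. x \<otimes>\<^bsub>G\<^esub> y) ws \<one>\<^bsub>G\<^esub>"

definition rel_step :: "('a list \<times> 'a list) set \<Rightarrow> 'a list \<Rightarrow> 'a list \<Rightarrow> bool" where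
  "rel_step R u v \<longleftrightarrow> (\<exists>a b x y. (x, y) \<in> R \<and> u = a @ x @ b \<and> v = a @ y @ b)"

definition word_cong :: "('a list \<times> 'a list) set \<Rightarrow> 'a list \<Rightarrow> 'a list \<Rightarrow> bool" where
  "word_cong R = (\<lambda>u v. rel_step R u v \<or> rel_step R v u)\<^sup>*\<^sup>*"

definition coxeter_rels :: "('a, 'b) monoid_scheme \<Rightarrow> 'a set \<Rightarrow> ('a list \<times> 'a list) set" where
  "coxeter_rels G S =
     {(concat (replicate (group.ord G (s \<otimes>\<^bsub>G\<^esub> t)) [s, t]), []) | s t. s \<in> S \<and> t \<in> S}"

text \<open>(G,S) is a Coxeter system: S is a generating set of involutions of G and G has the
  presentation \<open>\<langle>S | (st)^{m_{st}} = 1\<rangle>\<close>, i.e. two words in S have the same product iff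
  they are equivalent under the congruence generated by the Coxeter relations.\<close>
definition coxeter_system :: "('a, 'b) monoid_scheme \<Rightarrow> 'a set \<Rightarrow> bool" where
  "coxeter_system G S \<longleftrightarrow> group G \<and> S \<subseteq> carrier G \<and> generate G S = carrier G \<and>
     (\<forall>s\<in>S. s \<noteq> \<one>\<^bsub>G\<^esub> \<and> s \<otimes>\<^bsub>G\<^esub> s = \<one>\<^bsub>G\<^esub>) \<and>
     (\<forall>u\<in>lists S. \<forall>v\<in>lists S. wprod G u = wprod G v \<longleftrightarrow> word_cong (coxeter_rels G S) u v)"

definition clen :: "('a, 'b) monoid_scheme \<Rightarrow> 'a set \<Rightarrow> 'a \<Rightarrow> nat" where
  "clen G J w = (LEAST n. \<exists>ws\<in>lists J. length ws = n \<and> wprod G ws = w)"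

abbreviation parab :: "('a, 'b) monoid_scheme \<Rightarrow> 'a set \<Rightarrow> 'a set" where
  "parab G J \<equiv> generate G J"

definition weight_function :: "('a, 'b) monoid_scheme \<Rightarrow> 'a set \<Rightarrow> ('a \<Rightarrow> 'g::ab_group_add) \<Rightarrow> bool" where
  "weight_function G S L \<longleftrightarrow> (\<forall>w\<in>carrier G. \<forall>w'\<in>carrier G.
      clen G S (w \<otimes>\<^bsub>G\<^esub> w') = clen G S w + clen G S w' \<longrightarrow> L (w \<otimes>\<^bsub>G\<^esub> w') = L w + L w')"

definition mtrace :: "complex mat \<Rightarrow> complex" where
  "mtrace A = (\<Sum>i<dim_row A. A $$ (i, i))"

definition is_rep :: "('a, 'b) monoid_scheme \<Rightarrow> 'a set \<Rightarrow> nat \<Rightarrow> ('a \<Rightarrow> complex mat) \<Rightarrow> bool" where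
  "is_rep G H n \<rho> \<longleftrightarrow> (\<forall>h\<in>H. \<rho> h \<in> carrier_mat n n) \<and> \<rho> \<one>\<^bsub>G\<^esub> = 1\<^sub>m n \<and>
     (\<forall>g\<in>H. \<forall>h\<in>H. \<rho> (g \<otimes>\<^bsub>G\<^esub> h) = \<rho> g * \<rho> h)"

definition is_subspace :: "nat \<Rightarrow> complex vec set \<Rightarrow> bool" where
  "is_subspace n U \<longleftrightarrow> U \<subseteq> carrier_vec n \<and> 0\<^sub>v n \<in> U \<and>
     (\<forall>u\<in>U. \<forall>v\<in>U. u + v \<in> U) \<and> (\<forall>c. \<forall>u\<in>U. c \<cdot>\<^sub>v u \<in> U)"

definition is_irrep :: "('a, 'b) monoid_scheme \<Rightarrow> 'a set \<Rightarrow> nat \<Rightarrow> ('a \<Rightarrow> complex mat) \<Rightarrow> bool" where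
  "is_irrep G H n \<rho> \<longleftrightarrow> is_rep G H n \<rho> \<and> n > 0 \<and>
     (\<forall>U. is_subspace n U \<and> (\<forall>h\<in>H. \<forall>u\<in>U. \<rho> h *\<^sub>v u \<in> U) \<longrightarrow>
          U = {0\<^sub>v n} \<or> U = carrier_vec n)"

definition character :: "'a set \<Rightarrow> ('a \<Rightarrow> complex mat) \<Rightarrow> 'a \<Rightarrow> complex" where
  "character H \<rho> = (\<lambda>h. if h \<in> H then mtrace (\<rho> h) else 0)"

text \<open>Irr(H): irreducible representations, identified with their characters
  (two representations are isomorphic iff they have the same character).\<close>
definition Irr :: "('a, 'b) monoid_scheme \<Rightarrow> 'a set \<Rightarrow> ('a \<Rightarrow> complex) set" where
  "Irr G H = {character H \<rho> | n \<rho>. is_irrep G H n \<rho>}"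

definition char_inner :: "'a set \<Rightarrow> ('a \<Rightarrow> complex) \<Rightarrow> ('a \<Rightarrow> complex) \<Rightarrow> complex" where
  "char_inner K \<alpha> \<beta> = (\<Sum>g\<in>K. \<alpha> g * cnj (\<beta> g)) / of_nat (card K)"

definition ind_char :: "('a, 'b) monoid_scheme \<Rightarrow> 'a set \<Rightarrow> 'a set \<Rightarrow> ('a \<Rightarrow> complex) \<Rightarrow> 'a \<Rightarrow> complex" where
  "ind_char G H K \<psi> = (\<lambda>g. if g \<in> K then
      (\<Sum>x\<in>K. (if x \<otimes>\<^bsub>G\<^esub> g \<otimes>\<^bsub>G\<^esub> inv\<^bsub>G\<^esub> x \<in> H then \<psi> (x \<otimes>\<^bsub>G\<^esub> g \<otimes>\<^bsub>G\<^esub> inv\<^bsub>G\<^esub> x) else 0))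
        / of_nat (card H) else 0)"

definition constituent :: "('a, 'b) monoid_scheme \<Rightarrow> 'a set \<Rightarrow> 'a set \<Rightarrow> ('a \<Rightarrow> complex) \<Rightarrow> ('a \<Rightarrow> complex) \<Rightarrow> bool" where
  "constituent G H K M E \<longleftrightarrow> char_inner K (ind_char G H K M) E \<noteq> 0"

definition sgn_twist :: "('a, 'b) monoid_scheme \<Rightarrow> 'a set \<Rightarrow> ('a \<Rightarrow> complex) \<Rightarrow> 'a \<Rightarrow> complex" where
  "sgn_twist G J E = (\<lambda>w. (-1) ^ clen G J w * E w)"

definition zmul :: "int \<Rightarrow> 'g::ab_group_add \<Rightarrow> 'g" where
  "zmul k x = (if 0 \<le> k then (\<Sum>i<nat k. x) else - (\<Sum>i<nat (- k). x))"

definition reflections :: "('a, 'b) monoid_scheme \<Rightarrow> 'a set \<Rightarrow> 'a set" where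
  "reflections G J = {w \<otimes>\<^bsub>G\<^esub> s \<otimes>\<^bsub>G\<^esub> inv\<^bsub>G\<^esub> w | w s. w \<in> parab G J \<and> s \<in> J}"

definition conj_class :: "('a, 'b) monoid_scheme \<Rightarrow> 'a set \<Rightarrow> 'a \<Rightarrow> 'a set" where
  "conj_class G H t = {x \<otimes>\<^bsub>G\<^esub> t \<otimes>\<^bsub>G\<^esub> inv\<^bsub>G\<^esub> x | x. x \<in> H}"

definition refl_classes :: "('a, 'b) monoid_scheme \<Rightarrow> 'a set \<Rightarrow> 'a set set" where
  "refl_classes G J = {conj_class G (parab G J) t | t. t \<in> reflections G J}"

definition class_rep :: "'a set \<Rightarrow> 'a set \<Rightarrow> 'a" where
  "class_rep J C = (SOME s. s \<in> J \<and> s \<in> C)"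

definition omegaL :: "('a, 'b) monoid_scheme \<Rightarrow> ('a \<Rightarrow> 'g::ab_group_add) \<Rightarrow> 'a set \<Rightarrow> ('a \<Rightarrow> complex) \<Rightarrow> 'g" where
  "omegaL G L J E = (\<Sum>C\<in>refl_classes G J.
     zmul (THE k::int. of_int k = of_nat (card C) * E (class_rep J C) / E \<one>\<^bsub>G\<^esub>)
          (L (class_rep J C)))"

text \<open>\<open>atilde_aux G L n J E\<close> computes \<open>\<tilde>a_E\<close> for \<open>E \<in> Irr(W_J)\<close> whenever \<open>card J \<le> n\<close>
  (the recursion is over parabolic subgroups \<open>W_K\<close>, \<open>K \<subset> J\<close>).\<close>
primrec atilde_aux :: "('a, 'b) monoid_scheme \<Rightarrow> ('a \<Rightarrow> 'g::linordered_ab_group_add) \<Rightarrow> nat \<Rightarrow>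
    'a set \<Rightarrow> ('a \<Rightarrow> complex) \<Rightarrow> 'g" where
  "atilde_aux G L 0 J E = 0"
| "atilde_aux G L (Suc n) J E =
     (if J = {} then 0 else
      (let a' = (\<lambda>F. Max {atilde_aux G L n K M | K M.
                    K \<subset> J \<and> M \<in> Irr G (parab G K) \<and> constituent G (parab G K) (parab G J) M F})
       in if a' (sgn_twist G J E) - a' E \<le> omegaL G L J E then a' E
          else a' (sgn_twist G J E) - omegaL G L J E))"

definition atilde :: "('a, 'b) monoid_scheme \<Rightarrow> ('a \<Rightarrow> 'g::linordered_ab_group_add) \<Rightarrow>
    'a set \<Rightarrow> ('a \<Rightarrow> complex) \<Rightarrow> 'g" where
  "atilde G L J E = atilde_aux G L (card J) J E"

definition atilde' :: "('a, 'b) monoid_scheme \<Rightarrow> ('a \<Rightarrow> 'g::linordered_ab_group_add) \<Rightarrow>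
    'a set \<Rightarrow> ('a \<Rightarrow> complex) \<Rightarrow> 'g" where
  "atilde' G L J E = Max {atilde G L K M | K M.
      K \<subset> J \<and> M \<in> Irr G (parab G K) \<and> constituent G (parab G K) (parab G J) M E}"

end

theory Submission
  imports Defs "Jordan_Normal_Form.Char_Poly" "Jordan_Normal_Form.Schur_Decomposition"
    "Jordan_Normal_Form.Determinant"
begin

(* Parts (i) and (iii) are immediate once the recursion
   is written as  a_E = max(a'_E, a'_{E(x)sgn} - omega_L(E))  and the maxima defining a'_E range over
   finite sets containing 0.  The substance lies in (ii), which reduces to
   omega_L(E(x)sgn) = -omega_L(E).  Twisting by the sign negates the character at each simple
   reflection, so this holds provided the coefficients N_s chi(s)/chi(1) really are integers (the
   definition of omega_L takes "THE integer" equal to them).  That is the integrality of central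
   characters: by Schur's lemma the class sum acts on an irreducible representation by the scalar
   |C| chi(s)/chi(1); this scalar is an eigenvalue of an integer matrix, hence an algebraic integer,
   and it is rational because the trace of an involution is an integer. *)

lemma mtrace_one [simp]: "mtrace (1\<^sub>m n) = of_nat n"
  unfolding mtrace_def by simp

lemma mtrace_comm:
  assumes "X \<in> carrier_mat n n" "Y \<in> carrier_mat n n"
  shows "mtrace (X * Y) = mtrace (Y * X)"
proof -
  have "mtrace (X * Y) = (\<Sum>i<n. \<Sum>j<n. X $$ (i,j) * Y $$ (j,i))"
    using assms unfolding mtrace_def by (auto simp: scalar_prod_def atLeast0LessThan)
  also have "\<dots> = (\<Sum>j<n. \<Sum>i<n. Y $$ (j,i) * X $$ (i,j))"
    by (subst sum.swap) (simp add: mult.commute)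
  also have "\<dots> = mtrace (Y * X)"
    using assms unfolding mtrace_def by (auto simp: scalar_prod_def atLeast0LessThan)
  finally show ?thesis .
qed

lemma root_eigenvector:
  fixes A :: "complex mat"
  assumes A: "A \<in> carrier_mat n n" and cp: "char_poly A = (\<Prod>a\<leftarrow>es. [:- a, 1:])"
    and e: "e \<in> set es"
  obtains v where "v \<in> carrier_vec n" "v \<noteq> 0\<^sub>v n" "A *\<^sub>v v = e \<cdot>\<^sub>v v"
proof -
  have "poly (char_poly A) e = 0" unfolding cp using e by (rule linear_poly_root)
  then have "eigenvalue A e" using eigenvalue_root_char_poly[OF A] by simp
  then show ?thesis using that A unfolding eigenvalue_def eigenvector_def by auto
qed

lemma eigen_pow:
  fixes A :: "'a::field mat"
  assumes A: "A \<in> carrier_mat n n" and v: "v \<in> carrier_vec n" and ev: "A *\<^sub>v v = e \<cdot>\<^sub>v v"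
  shows "(A ^\<^sub>m k) *\<^sub>v v = (e ^ k) \<cdot>\<^sub>v v"
proof (induction k)
  case 0 then show ?case using v A by simp
next
  case (Suc k)
  have "(A ^\<^sub>m Suc k) *\<^sub>v v = (A ^\<^sub>m k) *\<^sub>v (A *\<^sub>v v)"
    using A v by (simp add: assoc_mult_mat_vec[of _ n n _ n])
  also have "\<dots> = e \<cdot>\<^sub>v ((A ^\<^sub>m k) *\<^sub>v v)"
    using A v ev by (simp add: mult_mat_vec[OF pow_carrier_mat[OF A] v])
  also have "\<dots> = (e ^ Suc k) \<cdot>\<^sub>v v" using Suc by (simp add: smult_smult_assoc mult.commute)
  finally show ?case .
qed

text \<open>The trace of a matrix of finite order \<open>m\<close> is a sum of \<open>n\<close> \<open>m\<close>-th roots of unity: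
  triangularise it by Schur decomposition and note that every eigenvalue satisfies \<open>e^m = 1\<close>.\<close>
lemma trace_roots:
  fixes A :: "complex mat"
  assumes A: "A \<in> carrier_mat n n" and Am: "A ^\<^sub>m m = 1\<^sub>m n"
  shows "\<exists>es. length es = n \<and> (\<forall>e\<in>set es. e ^ m = 1) \<and> mtrace A = sum_list es"
proof -
  obtain es where cp: "char_poly A = (\<Prod>a\<leftarrow>es. [:- a, 1:])" and len: "length es = n"
    using char_poly_factorized[OF A] by auto
  obtain B P Q where sd: "schur_decomposition A es = (B,P,Q)"
    by (cases "schur_decomposition A es") auto
  from schur_decomposition[OF A cp sd] have sim: "similar_mat_wit A B P Q" and dB: "diag_mat B = es"
    by auto
  from sim A have BPQ: "B \<in> carrier_mat n n" "P \<in> carrier_mat n n" "Q \<in> carrier_mat n n"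
    "Q * P = 1\<^sub>m n" "A = P * B * Q"
    unfolding similar_mat_wit_def Let_def by auto
  have "mtrace A = mtrace ((P * B) * Q)" using BPQ by simp
  also have "\<dots> = mtrace (Q * (P * B))" using BPQ by (intro mtrace_comm[of _ n]) auto
  also have "Q * (P * B) = B" using BPQ by (simp add: assoc_mult_mat[symmetric, of Q n n P n B n])
  also have "mtrace B = sum_list es" unfolding dB[symmetric] diag_mat_def mtrace_def
    by (simp add: interv_sum_list_conv_sum_set_nat atLeast0LessThan)
  finally have tr: "mtrace A = sum_list es" .
  have "e ^ m = 1" if e: "e \<in> set es" for e
  proof -
    obtain v where v: "v \<in> carrier_vec n" "v \<noteq> 0\<^sub>v n" "A *\<^sub>v v = e \<cdot>\<^sub>v v"
      using root_eigenvector[OF A cp e] .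
    have "v = (e ^ m) \<cdot>\<^sub>v v" using eigen_pow[OF A v(1) v(3), of m] Am v(1) by simp
    moreover obtain i where i: "i < n" "v $ i \<noteq> 0"
      using v(1,2) by (metis eq_vecI carrier_vecD index_zero_vec)
    ultimately have "v $ i = (e ^ m) * v $ i" using v(1) by (metis carrier_vecD index_smult_vec(1))
    then show ?thesis using i by simp
  qed
  then show ?thesis using len tr by blast
qed

definition invariant_subspace :: "'a set \<Rightarrow> nat \<Rightarrow> ('a \<Rightarrow> complex mat) \<Rightarrow> complex vec set \<Rightarrow> bool" where
  "invariant_subspace H n \<rho> U \<longleftrightarrow> is_subspace n U \<and> (\<forall>h\<in>H. \<forall>u\<in>U. \<rho> h *\<^sub>v u \<in> U)"

lemma irrep_invariant_full:
  assumes "is_irrep G H n \<rho>" "invariant_subspace H n \<rho> U" "v \<in> U" "v \<noteq> 0\<^sub>v n"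
  shows "U = carrier_vec n"
  using assms unfolding is_irrep_def invariant_subspace_def by blast

lemma annihilator_invariant:
  assumes rep: "is_rep G H n \<rho>" and Hm: "\<And>g h. g \<in> H \<Longrightarrow> h \<in> H \<Longrightarrow> g \<otimes>\<^bsub>G\<^esub> h \<in> H"
    and u: "u \<in> carrier_vec n"
  shows "invariant_subspace H n \<rho> {v \<in> carrier_vec n. \<forall>g\<in>H. (\<rho> g *\<^sub>v v) \<bullet> u = 0}"
    (is "invariant_subspace H n \<rho> ?U")
proof -
  have rho: "\<And>h. h \<in> H \<Longrightarrow> \<rho> h \<in> carrier_mat n n"
    "\<And>g h. g \<in> H \<Longrightarrow> h \<in> H \<Longrightarrow> \<rho> (g \<otimes>\<^bsub>G\<^esub> h) = \<rho> g * \<rho> h"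
    using rep unfolding is_rep_def by auto
  have add: "(\<rho> g *\<^sub>v (v + w)) \<bullet> u = (\<rho> g *\<^sub>v v) \<bullet> u + (\<rho> g *\<^sub>v w) \<bullet> u"
    if "g \<in> H" "v \<in> carrier_vec n" "w \<in> carrier_vec n" for g v w
    using that rho(1)[of g] u
    by (simp add: mult_add_distrib_mat_vec[of _ n n] add_scalar_prod_distrib[of _ n])
  have smult: "(\<rho> g *\<^sub>v (a \<cdot>\<^sub>v v)) \<bullet> u = a * ((\<rho> g *\<^sub>v v) \<bullet> u)"
    if "g \<in> H" "v \<in> carrier_vec n" for g v a
    using that rho(1)[of g] u by (simp add: mult_mat_vec[of _ n n] smult_scalar_prod_distrib[of _ n])
  have zero: "(\<rho> g *\<^sub>v 0\<^sub>v n) \<bullet> u = 0" if "g \<in> H" for g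
  proof -
    have "\<rho> g *\<^sub>v 0\<^sub>v n = 0\<^sub>v n" using rho(1)[OF that] by (intro eq_vecI) auto
    then show ?thesis using u by simp
  qed
  have stable: "\<rho> h *\<^sub>v v \<in> ?U" if h: "h \<in> H" and v: "v \<in> ?U" for h v
  proof -
    have "\<rho> g *\<^sub>v (\<rho> h *\<^sub>v v) = \<rho> (g \<otimes>\<^bsub>G\<^esub> h) *\<^sub>v v" if g: "g \<in> H" for g
      using rho(1)[OF g] rho(1)[OF h] rho(2)[OF g h] v by (auto simp: assoc_mult_mat_vec[of _ n n _ n])
    then show ?thesis using v h Hm rho(1)[OF h] by auto
  qed
  show ?thesis unfolding invariant_subspace_def is_subspace_def
    using add smult zero stable by auto
qed

text \<open>Fewer than \<open>n\<close> vectors of length \<open>n\<close> have a common nonzero "orthogonal" vector: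
  the matrix with these rows, padded by zero rows, is singular.\<close>
lemma common_orthogonal_vector:
  fixes c :: "nat \<Rightarrow> 'a::idom vec"
  assumes kn: "k < n" and c: "\<And>i. i < k \<Longrightarrow> c i \<in> carrier_vec n"
  obtains u where "u \<in> carrier_vec n" "u \<noteq> 0\<^sub>v n" "\<And>i. i < k \<Longrightarrow> c i \<bullet> u = 0"
proof -
  define d where "d = (\<lambda>i. if i < k then c i else 0\<^sub>v n)"
  define B where "B = mat\<^sub>r n n d"
  have B: "B \<in> carrier_mat n n" unfolding B_def by auto
  have "B = mat\<^sub>r n n (\<lambda>i. if i = k then 0\<^sub>v n else d i)"
    unfolding B_def by (rule arg_cong[where f = "mat\<^sub>r n n"]) (auto simp: d_def)
  also have "det \<dots> = 0" using kn c by (intro det_row_0) (auto simp: d_def)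
  finally obtain u where u: "u \<in> carrier_vec n" "u \<noteq> 0\<^sub>v n" "B *\<^sub>v u = 0\<^sub>v n"
    using det_0_iff_vec_prod_zero[OF B] by auto
  have "c i \<bullet> u = 0" if i: "i < k" for i
  proof -
    have "dim_vec (d i) = n" using c[OF i] i by (simp add: d_def)
    then have "(B *\<^sub>v u) $ i = d i \<bullet> u" using i kn unfolding B_def
      by (subst index_mult_mat_vec) simp_all
    then show ?thesis using u(3) i kn by (simp add: d_def)
  qed
  with u show ?thesis using that by blast
qed

text \<open>An irreducible representation of \<open>H\<close> has dimension at most \<open>|H|\<close>: otherwise some nonzero
  \<open>u\<close> is orthogonal to all vectors \<open>\<rho>(h) e\<^sub>0\<close>, and then the annihilator subspace is a proper
  nonzero invariant subspace.\<close>
lemma irrep_dim_le: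
  assumes H1: "\<one>\<^bsub>G\<^esub> \<in> H" and Hm: "\<And>g h. g \<in> H \<Longrightarrow> h \<in> H \<Longrightarrow> g \<otimes>\<^bsub>G\<^esub> h \<in> H"
    and fH: "finite H" and irr: "is_irrep G H n \<rho>"
  shows "n \<le> card H"
proof (rule ccontr)
  assume "\<not> n \<le> card H"
  then have kn: "card H < n" by simp
  obtain hs where hs: "set hs = H" "distinct hs" using finite_distinct_list[OF fH] by auto
  have k: "length hs = card H" using hs distinct_card by metis
  have rep: "is_rep G H n \<rho>" and rho: "\<And>h. h \<in> H \<Longrightarrow> \<rho> h \<in> carrier_mat n n" "\<rho> \<one>\<^bsub>G\<^esub> = 1\<^sub>m n"
    and n0: "n > 0"
    using irr unfolding is_irrep_def is_rep_def by auto
  obtain u where u: "u \<in> carrier_vec n" "u \<noteq> 0\<^sub>v n"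
    and orth_hs: "\<And>i. i < length hs \<Longrightarrow> (\<rho> (hs ! i) *\<^sub>v unit_vec n 0) \<bullet> u = 0"
    using common_orthogonal_vector[of "length hs" n "\<lambda>i. \<rho> (hs ! i) *\<^sub>v unit_vec n 0"] kn k rho(1) hs(1)
    by (metis (no_types, lifting) mult_mat_vec_carrier nth_mem unit_vec_carrier)
  define U where "U = {v \<in> carrier_vec n. \<forall>g\<in>H. (\<rho> g *\<^sub>v v) \<bullet> u = 0}"
  have "(\<rho> g *\<^sub>v unit_vec n 0) \<bullet> u = 0" if g: "g \<in> H" for g
    using g hs orth_hs by (metis in_set_conv_nth)
  then have "U = carrier_vec n"
    using irrep_invariant_full[OF irr annihilator_invariant[OF rep Hm u(1)], of "unit_vec n 0"]
      n0 unfolding U_def by auto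
  have "u $ j = 0" if j: "j < n" for j
  proof -
    have "(\<rho> \<one>\<^bsub>G\<^esub> *\<^sub>v unit_vec n j) \<bullet> u = 0"
      using \<open>U = carrier_vec n\<close> H1 unfolding U_def by auto
    then show ?thesis using rho(2) u(1) j by simp
  qed
  then have "u = 0\<^sub>v n" using u(1) by (intro eq_vecI) auto
  with u(2) show False by simp
qed

subsection \<open>Finiteness of \<open>Irr(H)\<close>\<close>

lemma Irr_E:
  assumes "E \<in> Irr G H"
  obtains n \<rho> where "is_irrep G H n \<rho>" "E = character H \<rho>"
  using assms unfolding Irr_def by auto

lemma rep_pow:
  assumes H1: "\<one>\<^bsub>G\<^esub> \<in> H" and Hm: "\<And>g h. g \<in> H \<Longrightarrow> h \<in> H \<Longrightarrow> g \<otimes>\<^bsub>G\<^esub> h \<in> H"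
    and rep: "is_rep G H n \<rho>" and h: "h \<in> H"
  shows "h [^]\<^bsub>G\<^esub> (k::nat) \<in> H \<and> \<rho> (h [^]\<^bsub>G\<^esub> k) = \<rho> h ^\<^sub>m k"
proof (induction k)
  case 0 then show ?case using H1 rep h unfolding is_rep_def by auto
next
  case (Suc k)
  then show ?case using Hm[OF _ h] rep h unfolding is_rep_def by simp
qed

text \<open>In a finite group every value \<open>tr \<rho>(h)\<close> is a sum of \<open>n\<close> roots of unity of order at most
  \<open>|G|\<close>, since \<open>\<rho>(h)\<close> has finite order \<open>ord h\<close>.\<close>
lemma rep_trace_roots:
  assumes grp: "group G" and fin: "finite (carrier G)" and sub: "subgroup H G"
    and rep: "is_rep G H n \<rho>" and h: "h \<in> H"
  shows "\<exists>es. length es = n \<and> (\<forall>e\<in>set es. \<exists>k\<in>{1..card (carrier G)}. e ^ k = 1) \<and>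
    mtrace (\<rho> h) = sum_list es"
proof -
  have hc: "h \<in> carrier G" using h sub by (simp add: subgroup.mem_carrier)
  define m where "m = group.ord G h"
  have m: "m \<in> {1..card (carrier G)}" unfolding m_def
    using group.ord_ge_1[OF grp fin hc] group.ord_le_group_order[OF grp fin hc]
    by (auto simp: Coset.order_def)
  have "\<rho> h ^\<^sub>m m = 1\<^sub>m n"
    using rep_pow[OF subgroup.one_closed[OF sub] subgroup.m_closed[OF sub] rep h, of m]
      group.pow_ord_eq_1[OF grp hc] rep
    unfolding m_def is_rep_def by simp
  then show ?thesis using trace_roots[of "\<rho> h" n m] rep h m unfolding is_rep_def by blast
qed

text \<open>A finite group has only finitely many irreducible characters: their degrees are bounded
  by the group order and their values are sums of boundedly many roots of unity of bounded order.
  This makes the maxima in the definition of \<open>\<tilde>a'\<close> maxima over finite sets.\<close>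
lemma Irr_finite:
  assumes grp: "group G" and fin: "finite (carrier G)" and sub: "subgroup H G"
  shows "finite (Irr G H)"
proof -
  define N where "N = card (carrier G)"
  define R where "R = (\<Union>k\<in>{1..N}. {z::complex. z ^ k = 1})"
  have fR: "finite R" unfolding R_def by (auto intro: finite_roots_unity)
  define V where "V = sum_list ` {xs. set xs \<subseteq> R \<and> length xs \<le> N}"
  have fV: "finite V" unfolding V_def using finite_lists_length_le[OF fR] by blast
  have HG: "H \<subseteq> carrier G" using sub by (rule subgroup.subset)
  have fH: "finite H" using HG fin by (rule finite_subset)
  have "Irr G H \<subseteq> {f. \<forall>x. (x \<in> H \<longrightarrow> f x \<in> V) \<and> (x \<notin> H \<longrightarrow> f x = 0)}"
  proof
    fix E assume "E \<in> Irr G H"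
    then obtain n \<rho> where irr: "is_irrep G H n \<rho>" and Ed: "E = character H \<rho>" by (rule Irr_E)
    have "n \<le> N"
      using irrep_dim_le[OF subgroup.one_closed[OF sub] subgroup.m_closed[OF sub] fH irr]
        card_mono[OF fin HG] unfolding N_def by simp
    moreover have rep: "is_rep G H n \<rho>" using irr unfolding is_irrep_def by simp
    ultimately have "mtrace (\<rho> h) \<in> V" if "h \<in> H" for h
      using rep_trace_roots[OF grp fin sub rep that] unfolding V_def R_def N_def by fastforce
    then show "E \<in> {f. \<forall>x. (x \<in> H \<longrightarrow> f x \<in> V) \<and> (x \<notin> H \<longrightarrow> f x = 0)}"
      unfolding Ed character_def by auto
  qed
  moreover have "finite {f. \<forall>x. (x \<in> H \<longrightarrow> f x \<in> V) \<and> (x \<notin> H \<longrightarrow> f x = (0::complex))}"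
    by (rule finite_set_of_finite_funs[OF fH fV])
  ultimately show ?thesis by (rule finite_subset)
qed

subsection \<open>Schur's lemma\<close>

lemma eigenspace_invariant:
  assumes rho: "\<And>h. h \<in> H \<Longrightarrow> \<rho> h \<in> carrier_mat n n" and A: "A \<in> carrier_mat n n"
    and comm: "\<And>h. h \<in> H \<Longrightarrow> \<rho> h * A = A * \<rho> h"
  shows "invariant_subspace H n \<rho> {v \<in> carrier_vec n. A *\<^sub>v v = e \<cdot>\<^sub>v v}"
    (is "invariant_subspace H n \<rho> ?U")
proof -
  have "0\<^sub>v n \<in> ?U" using A by (auto intro!: eq_vecI)
  moreover have "v + w \<in> ?U" if "v \<in> ?U" "w \<in> ?U" for v w
    using that A by (auto simp: mult_add_distrib_mat_vec[OF A] smult_add_distrib_vec)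
  moreover have "a \<cdot>\<^sub>v v \<in> ?U" if "v \<in> ?U" for a v
    using that A by (auto simp: mult_mat_vec[OF A] smult_smult_assoc mult.commute)
  ultimately have "is_subspace n ?U" unfolding is_subspace_def by blast
  moreover have "\<rho> h *\<^sub>v v \<in> ?U" if h: "h \<in> H" and v: "v \<in> ?U" for h v
  proof -
    have "A *\<^sub>v (\<rho> h *\<^sub>v v) = (A * \<rho> h) *\<^sub>v v" using A rho[OF h] v
      by (simp add: assoc_mult_mat_vec[of _ n n _ n])
    also have "\<dots> = (\<rho> h * A) *\<^sub>v v" using comm[OF h] by simp
    also have "\<dots> = \<rho> h *\<^sub>v (A *\<^sub>v v)" using A rho[OF h] v
      by (intro assoc_mult_mat_vec[of _ n n _ n]) auto
    also have "\<dots> = e \<cdot>\<^sub>v (\<rho> h *\<^sub>v v)" using v by (simp add: mult_mat_vec[OF rho[OF h]])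
    finally show ?thesis using v rho[OF h] by auto
  qed
  ultimately show ?thesis unfolding invariant_subspace_def by blast
qed

lemma schur_scalar:
  assumes irr: "is_irrep G H n \<rho>" and A: "A \<in> carrier_mat n n"
    and comm: "\<And>h. h \<in> H \<Longrightarrow> \<rho> h * A = A * \<rho> h"
  shows "\<exists>c. A = c \<cdot>\<^sub>m 1\<^sub>m n"
proof -
  have n0: "n > 0" and rho: "\<And>h. h \<in> H \<Longrightarrow> \<rho> h \<in> carrier_mat n n"
    using irr unfolding is_irrep_def is_rep_def by auto
  obtain es where cp: "char_poly A = (\<Prod>a\<leftarrow>es. [:- a, 1:])" and len: "length es = n"
    using char_poly_factorized[OF A] by auto
  define e where "e = es ! 0"
  have "e \<in> set es" unfolding e_def using len n0 by auto
  then obtain v where v: "v \<in> carrier_vec n" "v \<noteq> 0\<^sub>v n" "A *\<^sub>v v = e \<cdot>\<^sub>v v"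
    by (rule root_eigenvector[OF A cp])
  have full: "{v \<in> carrier_vec n. A *\<^sub>v v = e \<cdot>\<^sub>v v} = carrier_vec n"
  proof (rule irrep_invariant_full[OF irr eigenspace_invariant[OF rho A comm]])
    show "v \<in> {v \<in> carrier_vec n. A *\<^sub>v v = e \<cdot>\<^sub>v v}" using v by simp
  qed (use v(2) in auto)
  have "A = e \<cdot>\<^sub>m 1\<^sub>m n"
  proof (rule eq_matI)
    fix i j assume "i < dim_row (e \<cdot>\<^sub>m 1\<^sub>m n)" "j < dim_col (e \<cdot>\<^sub>m 1\<^sub>m n)"
    then have ij: "i < n" "j < n" by auto
    have "unit_vec n j \<in> {v \<in> carrier_vec n. A *\<^sub>v v = e \<cdot>\<^sub>v v}"
      unfolding full by simp
    then have "A *\<^sub>v unit_vec n j = e \<cdot>\<^sub>v unit_vec n j" by simp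
    then have "(A *\<^sub>v unit_vec n j) $ i = (e \<cdot>\<^sub>v unit_vec n j) $ i" by simp
    then show "A $$ (i,j) = (e \<cdot>\<^sub>m 1\<^sub>m n) $$ (i,j)" using ij A by auto
  qed (use A in auto)
  then show ?thesis by blast
qed

context group
begin

lemma conj_class_subset:
  assumes "s \<in> carrier G"
  shows "conj_class G (carrier G) s \<subseteq> carrier G"
  using assms unfolding conj_class_def by auto

lemma conj_class_closed:
  assumes s: "s \<in> carrier G" and g: "g \<in> carrier G" and t: "t \<in> conj_class G (carrier G) s"
  shows "g \<otimes> t \<otimes> inv g \<in> conj_class G (carrier G) s"
proof -
  obtain x where x: "x \<in> carrier G" "t = x \<otimes> s \<otimes> inv x" using t unfolding conj_class_def by auto
  have "g \<otimes> t \<otimes> inv g = (g \<otimes> x) \<otimes> s \<otimes> inv (g \<otimes> x)"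
    using x g s by (simp add: inv_mult_group m_assoc)
  then show ?thesis using g x unfolding conj_class_def by blast
qed

lemma conj_class_eq:
  assumes t: "t \<in> carrier G" and s: "s \<in> conj_class G (carrier G) t"
  shows "conj_class G (carrier G) s = conj_class G (carrier G) t"
proof -
  obtain x where x: "x \<in> carrier G" "s = x \<otimes> t \<otimes> inv x" using s unfolding conj_class_def by auto
  have sc: "s \<in> carrier G" using x t by simp
  have "t = inv x \<otimes> s \<otimes> inv (inv x)"
    using x t by (simp add: m_assoc[symmetric]) (simp add: m_assoc)
  then have "t \<in> conj_class G (carrier G) s" using x unfolding conj_class_def by blast
  show ?thesis
  proof
    show "conj_class G (carrier G) s \<subseteq> conj_class G (carrier G) t"
      using conj_class_closed[OF t _ s] unfolding conj_class_def[of G _ s] by auto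
    show "conj_class G (carrier G) t \<subseteq> conj_class G (carrier G) s"
      using conj_class_closed[OF sc _ \<open>t \<in> conj_class G (carrier G) s\<close>]
      unfolding conj_class_def[of G _ t] by auto
  qed
qed

lemma conj_class_bij:
  assumes s: "s \<in> carrier G" and g: "g \<in> carrier G"
  shows "bij_betw (\<lambda>t. g \<otimes> t \<otimes> inv g) (conj_class G (carrier G) s) (conj_class G (carrier G) s)"
proof (rule bij_betw_byWitness[where f' = "\<lambda>t. inv g \<otimes> t \<otimes> g"])
  note C = conj_class_subset[OF s]
  have cancel: "inv a \<otimes> (a \<otimes> y) = y" "a \<otimes> (inv a \<otimes> y) = y"
    if "a \<in> carrier G" "y \<in> carrier G" for a y
    using that by (simp_all add: m_assoc[symmetric])
  show "\<forall>a\<in>conj_class G (carrier G) s. inv g \<otimes> (g \<otimes> a \<otimes> inv g) \<otimes> g = a"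
    using g C by (auto simp: m_assoc cancel subsetD)
  show "\<forall>a\<in>conj_class G (carrier G) s. g \<otimes> (inv g \<otimes> a \<otimes> g) \<otimes> inv g = a"
    using g C by (auto simp: m_assoc cancel subsetD)
  show "(\<lambda>t. g \<otimes> t \<otimes> inv g) ` conj_class G (carrier G) s \<subseteq> conj_class G (carrier G) s"
    using conj_class_closed[OF s g] by auto
  show "(\<lambda>t. inv g \<otimes> t \<otimes> g) ` conj_class G (carrier G) s \<subseteq> conj_class G (carrier G) s"
    using conj_class_closed[OF s, of "inv g"] g by auto
qed

lemma rep_trace_conj:
  assumes rep: "is_rep G (carrier G) n \<rho>" and y: "y \<in> carrier G" and s: "s \<in> carrier G"
  shows "mtrace (\<rho> (y \<otimes> s \<otimes> inv y)) = mtrace (\<rho> s)"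
proof -
  have rho: "\<And>h. h \<in> carrier G \<Longrightarrow> \<rho> h \<in> carrier_mat n n" "\<rho> \<one> = 1\<^sub>m n"
    "\<And>g h. g \<in> carrier G \<Longrightarrow> h \<in> carrier G \<Longrightarrow> \<rho> (g \<otimes> h) = \<rho> g * \<rho> h"
    using rep unfolding is_rep_def by auto
  have "mtrace (\<rho> (y \<otimes> s \<otimes> inv y)) = mtrace ((\<rho> y * \<rho> s) * \<rho> (inv y))" using y s rho by simp
  also have "\<dots> = mtrace (\<rho> (inv y) * (\<rho> y * \<rho> s))"
    by (rule mtrace_comm[of _ n]) (use y s rho in \<open>auto intro!: mult_carrier_mat\<close>)
  also have "\<rho> (inv y) * (\<rho> y * \<rho> s) = (\<rho> (inv y) * \<rho> y) * \<rho> s"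
    using y s rho by (simp add: assoc_mult_mat[of _ n n _ n _ n])
  also have "\<rho> (inv y) * \<rho> y = 1\<^sub>m n" using y rho(3)[of "inv y" y] rho(2) by simp
  finally show ?thesis using rho(1)[OF s] by simp
qed

end

subsection \<open>Class sums act by scalars that are algebraic integers\<close>

definition msum :: "'a set \<Rightarrow> ('a \<Rightarrow> complex mat) \<Rightarrow> nat \<Rightarrow> complex mat" where
  "msum C f n = mat n n (\<lambda>(i,j). \<Sum>t\<in>C. f t $$ (i,j))"

lemma msum_carrier [simp]: "msum C f n \<in> carrier_mat n n"
  unfolding msum_def by simp

lemma msum_cong: "(\<And>t. t \<in> C \<Longrightarrow> f t = f' t) \<Longrightarrow> msum C f n = msum C f' n"
  unfolding msum_def by (auto intro!: eq_matI sum.cong)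

lemma msum_reindex:
  assumes "bij_betw h C D"
  shows "msum D f n = msum C (f \<circ> h) n"
  unfolding msum_def using sum.reindex_bij_betw[OF assms, of "\<lambda>t. f t $$ _"]
  by (intro eq_matI) auto

lemma mult_entry:
  assumes "A \<in> carrier_mat n n" "B \<in> carrier_mat n n" "i < n" "j < n"
  shows "(A * B) $$ (i,j) = (\<Sum>k<n. A $$ (i,k) * B $$ (k,j))"
  using assms by (simp add: scalar_prod_def atLeast0LessThan)

lemma mult_msum_left:
  assumes X: "X \<in> carrier_mat n n" and f: "\<And>t. t \<in> C \<Longrightarrow> f t \<in> carrier_mat n n"
  shows "X * msum C f n = msum C (\<lambda>t. X * f t) n"
proof (rule eq_matI)
  fix i j assume "i < dim_row (msum C (\<lambda>t. X * f t) n)" "j < dim_col (msum C (\<lambda>t. X * f t) n)"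
  then have ij: "i < n" "j < n" unfolding msum_def by auto
  have "(X * msum C f n) $$ (i,j) = (\<Sum>k<n. X $$ (i,k) * (\<Sum>t\<in>C. f t $$ (k,j)))"
    using X ij by (simp add: scalar_prod_def msum_def atLeast0LessThan)
  also have "\<dots> = (\<Sum>t\<in>C. \<Sum>k<n. X $$ (i,k) * f t $$ (k,j))"
    by (simp add: sum_distrib_left sum.swap[of _ C])
  also have "\<dots> = msum C (\<lambda>t. X * f t) n $$ (i,j)"
    using X f ij by (auto simp: msum_def mult_entry intro!: sum.cong)
  finally show "(X * msum C f n) $$ (i,j) = msum C (\<lambda>t. X * f t) n $$ (i,j)" .
qed (use X in \<open>auto simp: msum_def\<close>)

lemma mult_msum_right:
  assumes X: "X \<in> carrier_mat n n" and f: "\<And>t. t \<in> C \<Longrightarrow> f t \<in> carrier_mat n n"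
  shows "msum C f n * X = msum C (\<lambda>t. f t * X) n"
proof (rule eq_matI)
  fix i j assume "i < dim_row (msum C (\<lambda>t. f t * X) n)" "j < dim_col (msum C (\<lambda>t. f t * X) n)"
  then have ij: "i < n" "j < n" unfolding msum_def by auto
  have "(msum C f n * X) $$ (i,j) = (\<Sum>k<n. (\<Sum>t\<in>C. f t $$ (i,k)) * X $$ (k,j))"
    using X ij by (simp add: scalar_prod_def msum_def atLeast0LessThan)
  also have "\<dots> = (\<Sum>t\<in>C. \<Sum>k<n. f t $$ (i,k) * X $$ (k,j))"
    by (simp add: sum_distrib_right sum.swap[of _ C])
  also have "\<dots> = msum C (\<lambda>t. f t * X) n $$ (i,j)"
    using X f ij by (auto simp: msum_def mult_entry[OF f X ij] intro!: sum.cong)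
  finally show "(msum C f n * X) $$ (i,j) = msum C (\<lambda>t. f t * X) n $$ (i,j)" .
qed (use X in \<open>auto simp: msum_def\<close>)

lemma mtrace_msum:
  assumes "\<And>t. t \<in> C \<Longrightarrow> f t \<in> carrier_mat n n"
  shows "mtrace (msum C f n) = (\<Sum>t\<in>C. mtrace (f t))"
proof -
  have "mtrace (msum C f n) = (\<Sum>i<n. \<Sum>t\<in>C. f t $$ (i, i))" unfolding mtrace_def msum_def by simp
  also have "\<dots> = (\<Sum>t\<in>C. \<Sum>i<n. f t $$ (i, i))" by (rule sum.swap)
  also have "\<dots> = (\<Sum>t\<in>C. mtrace (f t))" unfolding mtrace_def using assms by (auto intro!: sum.cong)
  finally show ?thesis .
qed

context group
begin

lemma class_sum_central:
  assumes rep: "is_rep G (carrier G) n \<rho>" and s: "s \<in> carrier G" and g: "g \<in> carrier G"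
  defines "C \<equiv> conj_class G (carrier G) s"
  shows "\<rho> g * msum C \<rho> n = msum C \<rho> n * \<rho> g"
proof -
  have rho: "\<And>h. h \<in> carrier G \<Longrightarrow> \<rho> h \<in> carrier_mat n n"
    "\<And>g h. g \<in> carrier G \<Longrightarrow> h \<in> carrier G \<Longrightarrow> \<rho> (g \<otimes> h) = \<rho> g * \<rho> h"
    using rep unfolding is_rep_def by auto
  have Cc: "C \<subseteq> carrier G" unfolding C_def by (rule conj_class_subset[OF s])
  have "\<rho> g * msum C \<rho> n = msum C (\<lambda>t. \<rho> (g \<otimes> t)) n"
    using rho g Cc by (subst mult_msum_left) (auto intro!: msum_cong)
  also have "\<dots> = msum C ((\<lambda>t. \<rho> (t \<otimes> g)) \<circ> (\<lambda>t. g \<otimes> t \<otimes> inv g)) n"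
    using g Cc by (intro msum_cong) (auto simp: m_assoc)
  also have "\<dots> = msum C (\<lambda>t. \<rho> (t \<otimes> g)) n"
    unfolding C_def by (rule msum_reindex[symmetric, OF conj_class_bij[OF s g]])
  also have "\<dots> = msum C \<rho> n * \<rho> g"
    using rho g Cc by (subst mult_msum_right) (auto intro!: msum_cong)
  finally show ?thesis .
qed

text \<open>By Schur's lemma the class sum acts on an irreducible representation as the scalar
  \<open>|C| \<chi>(s) / \<chi>(1)\<close>; the scalar is determined by comparing traces.\<close>
lemma class_sum_scalar:
  assumes irr: "is_irrep G (carrier G) n \<rho>" and s: "s \<in> carrier G"
  defines "C \<equiv> conj_class G (carrier G) s"
  shows "msum C \<rho> n = (of_nat (card C) * mtrace (\<rho> s) / of_nat n) \<cdot>\<^sub>m 1\<^sub>m n"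
proof -
  have rep: "is_rep G (carrier G) n \<rho>" and n0: "n > 0"
    and rho: "\<And>h. h \<in> carrier G \<Longrightarrow> \<rho> h \<in> carrier_mat n n"
    using irr unfolding is_irrep_def is_rep_def by auto
  have Cc: "C \<subseteq> carrier G" unfolding C_def by (rule conj_class_subset[OF s])
  obtain c where c: "msum C \<rho> n = c \<cdot>\<^sub>m 1\<^sub>m n"
    using schur_scalar[OF irr msum_carrier] class_sum_central[OF rep s] unfolding C_def by blast
  have "mtrace (msum C \<rho> n) = (\<Sum>t\<in>C. mtrace (\<rho> t))"
    using rho Cc by (intro mtrace_msum) auto
  also have "\<dots> = (\<Sum>t\<in>C. mtrace (\<rho> s))"
    using rep_trace_conj[OF rep _ s] unfolding C_def conj_class_def by (intro sum.cong) auto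
  finally have "c * of_nat n = of_nat (card C) * mtrace (\<rho> s)"
    unfolding c by (simp add: mtrace_def[of "c \<cdot>\<^sub>m 1\<^sub>m n"] mult.commute)
  then have "c = of_nat (card C) * mtrace (\<rho> s) / of_nat n" using n0 by (simp add: field_simps)
  then show ?thesis using c by simp
qed

lemma sum_translated_class:
  assumes Cc: "C \<subseteq> carrier G" and g: "g \<in> carrier G"
  shows "(\<Sum>x\<in>{x\<in>carrier G. x \<otimes> inv g \<in> C}. f x) = (\<Sum>t\<in>C. f (t \<otimes> g))"
proof (rule sum.reindex_bij_betw[symmetric, of "\<lambda>t. t \<otimes> g", unfolded o_def])
  show "bij_betw (\<lambda>t. t \<otimes> g) C {x \<in> carrier G. x \<otimes> inv g \<in> C}"
    by (rule bij_betw_byWitness[where f' = "\<lambda>x. x \<otimes> inv g"]) (use g Cc in \<open>auto simp: m_assoc\<close>)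
qed

end

text \<open>An eigenvalue of an integer matrix is an algebraic integer: it is a root of the monic
  integer characteristic polynomial.\<close>
lemma int_mat_eigenvalue_algebraic_int:
  fixes M :: "int mat" and c :: complex
  assumes M: "M \<in> carrier_mat N N" and w: "w \<in> carrier_vec N" "w \<noteq> 0\<^sub>v N"
    and ev: "map_mat of_int M *\<^sub>v w = c \<cdot>\<^sub>v w"
  shows "algebraic_int c"
proof -
  have Mc: "map_mat (of_int :: int \<Rightarrow> complex) M \<in> carrier_mat N N" using M by simp
  have "eigenvalue (map_mat of_int M) c"
    unfolding eigenvalue_def eigenvector_def using ev w Mc by blast
  then have "poly (char_poly (map_mat of_int M)) c = 0" using eigenvalue_root_char_poly[OF Mc] by simp
  then have "poly (map_poly of_int (char_poly M)) c = 0" by (simp add: of_int_hom.char_poly_hom[OF M])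
  moreover have "lead_coeff (char_poly M) = 1" using degree_monic_char_poly[OF M] by simp
  ultimately show ?thesis unfolding algebraic_int_altdef_ipoly by blast
qed

subsection \<open>Integrality of central characters\<close>

context group
begin

lemma class_sum_entry:
  assumes irr: "is_irrep G (carrier G) n \<rho>" and s: "s \<in> carrier G" and g: "g \<in> carrier G"
  defines "C \<equiv> conj_class G (carrier G) s"
  shows "(\<Sum>x\<in>{x\<in>carrier G. x \<otimes> inv g \<in> C}. \<rho> x $$ (0,0))
    = (of_nat (card C) * mtrace (\<rho> s) / of_nat n) * \<rho> g $$ (0,0)"
proof -
  have n0: "n > 0" and rho: "\<And>h. h \<in> carrier G \<Longrightarrow> \<rho> h \<in> carrier_mat n n"
    "\<And>g h. g \<in> carrier G \<Longrightarrow> h \<in> carrier G \<Longrightarrow> \<rho> (g \<otimes> h) = \<rho> g * \<rho> h"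
    using irr unfolding is_irrep_def is_rep_def by auto
  have Cc: "C \<subseteq> carrier G" unfolding C_def by (rule conj_class_subset[OF s])
  have "(\<Sum>x\<in>{x\<in>carrier G. x \<otimes> inv g \<in> C}. \<rho> x $$ (0,0)) = (\<Sum>t\<in>C. \<rho> (t \<otimes> g) $$ (0,0))"
    by (rule sum_translated_class[OF Cc g])
  also have "\<dots> = msum C (\<lambda>t. \<rho> (t \<otimes> g)) n $$ (0,0)" unfolding msum_def using n0 by simp
  also have "msum C (\<lambda>t. \<rho> (t \<otimes> g)) n = msum C \<rho> n * \<rho> g"
    using rho g Cc by (subst mult_msum_right) (auto intro!: msum_cong)
  also have "msum C \<rho> n = (of_nat (card C) * mtrace (\<rho> s) / of_nat n) \<cdot>\<^sub>m 1\<^sub>m n"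
    unfolding C_def by (rule class_sum_scalar[OF irr s])
  finally show ?thesis using rho(1)[OF g] n0 by simp
qed

text \<open>The scalar \<open>c = |C| \<chi>(s) / \<chi>(1)\<close> is an algebraic integer: listing the group as
  \<open>g\<^sub>1, \<dots>, g\<^sub>N\<close>, the vector \<open>(\<rho>(g\<^sub>i)\<^sub>0\<^sub>0)\<^sub>i\<close> is an eigenvector with eigenvalue \<open>c\<close> of the
  0/1 matrix \<open>([g\<^sub>j g\<^sub>i\<^sup>-\<^sup>1 \<in> C])\<^sub>i\<^sub>j\<close>, by the previous lemma.\<close>
lemma class_scalar_algebraic_int:
  assumes fin: "finite (carrier G)" and irr: "is_irrep G (carrier G) n \<rho>" and s: "s \<in> carrier G"
  defines "C \<equiv> conj_class G (carrier G) s"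
  shows "algebraic_int (of_nat (card C) * mtrace (\<rho> s) / of_nat n)"
proof -
  define c where "c = of_nat (card C) * mtrace (\<rho> s) / of_nat n"
  have n0: "n > 0" and rho1: "\<rho> \<one> = 1\<^sub>m n"
    using irr unfolding is_irrep_def is_rep_def by auto
  obtain gs where gs: "set gs = carrier G" "distinct gs" using finite_distinct_list[OF fin] by auto
  define N where "N = length gs"
  have bij: "bij_betw ((!) gs) {..<N} (carrier G)"
    unfolding N_def by (rule bij_betw_nth) (use gs in auto)
  define M :: "int mat" where "M = mat N N (\<lambda>(i,j). if gs ! j \<otimes> inv (gs ! i) \<in> C then 1 else 0)"
  define w where "w = vec N (\<lambda>i. \<rho> (gs ! i) $$ (0,0))"
  have ev: "map_mat of_int M *\<^sub>v w = c \<cdot>\<^sub>v w"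
  proof (rule eq_vecI)
    fix i assume "i < dim_vec (c \<cdot>\<^sub>v w)"
    then have i: "i < N" unfolding w_def by simp
    define g where "g = gs ! i"
    have g: "g \<in> carrier G" unfolding g_def using i gs(1) N_def nth_mem by blast
    have "(map_mat of_int M *\<^sub>v w) $ i =
        (\<Sum>j<N. if gs ! j \<otimes> inv g \<in> C then \<rho> (gs ! j) $$ (0,0) else 0)"
      using i by (auto simp: M_def w_def g_def scalar_prod_def atLeast0LessThan intro!: sum.cong)
    also have "\<dots> = (\<Sum>x\<in>carrier G. if x \<otimes> inv g \<in> C then \<rho> x $$ (0,0) else 0)"
      using sum.reindex_bij_betw[OF bij, of "\<lambda>x. if x \<otimes> inv g \<in> C then \<rho> x $$ (0,0) else 0"]
      by simp
    also have "\<dots> = (\<Sum>x\<in>{x\<in>carrier G. x \<otimes> inv g \<in> C}. \<rho> x $$ (0,0))"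
      using fin by (simp add: sum.inter_filter)
    also have "\<dots> = c * \<rho> g $$ (0,0)" unfolding c_def C_def by (rule class_sum_entry[OF irr s g])
    finally show "(map_mat of_int M *\<^sub>v w) $ i = (c \<cdot>\<^sub>v w) $ i" unfolding w_def g_def using i by simp
  qed (simp add: M_def w_def)
  have "\<one> \<in> set gs" using gs(1) by simp
  then obtain i1 where i1: "i1 < N" "gs ! i1 = \<one>" unfolding N_def in_set_conv_nth by blast
  have "w $ i1 = 1" unfolding w_def using i1 rho1 n0 by simp
  then have "w \<noteq> 0\<^sub>v N" using i1 by auto
  then show ?thesis unfolding c_def[symmetric]
    using int_mat_eigenvalue_algebraic_int[OF _ _ _ ev, of N] by (auto simp: M_def w_def)
qed

text \<open>The trace of an involution is an integer (a sum of eigenvalues \<open>\<plusminus>1\<close>).\<close>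
lemma involution_trace_int:
  assumes rep: "is_rep G (carrier G) n \<rho>" and s: "s \<in> carrier G" and ss: "s \<otimes> s = \<one>"
  shows "mtrace (\<rho> s) \<in> \<int>"
proof -
  have rs: "\<rho> s \<in> carrier_mat n n" using rep s unfolding is_rep_def by auto
  have "\<rho> s * \<rho> s = 1\<^sub>m n" using rep s ss unfolding is_rep_def by metis
  then have "\<rho> s ^\<^sub>m 2 = 1\<^sub>m n" using rs by (simp add: numeral_2_eq_2)
  then obtain es where es: "\<forall>e\<in>set es. e ^ 2 = 1" "mtrace (\<rho> s) = sum_list es"
    using trace_roots[OF rs] by blast
  have "sum_list es \<in> \<int>" using es(1)
    by (induction es) (auto simp: power2_eq_1_iff)
  then show ?thesis using es(2) by simp
qed

text \<open>The number is rational and an algebraic integer.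
  This makes the coefficients of \<open>\<omega>\<^sub>L\<close> well-defined integers.\<close>
lemma class_coefficient_int:
  assumes fin: "finite (carrier G)" and irr: "is_irrep G (carrier G) n \<rho>"
    and t: "t \<in> carrier G" and s: "s \<in> conj_class G (carrier G) t" and ss: "s \<otimes> s = \<one>"
  shows "of_nat (card (conj_class G (carrier G) t)) * mtrace (\<rho> s) / of_nat n \<in> \<int>"
proof -
  have sc: "s \<in> carrier G" using conj_class_subset[OF t] s by blast
  have rep: "is_rep G (carrier G) n \<rho>" using irr unfolding is_irrep_def by simp
  have "of_nat (card (conj_class G (carrier G) t)) * mtrace (\<rho> s) / of_nat n \<in> \<rat>"
    using involution_trace_int[OF rep sc ss] Ints_subset_Rats by (intro Rats_divide Rats_mult) auto
  moreover have "algebraic_int (of_nat (card (conj_class G (carrier G) t)) * mtrace (\<rho> s) / of_nat n)"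
    using class_scalar_algebraic_int[OF fin irr sc] conj_class_eq[OF t s] by simp
  ultimately show ?thesis using rational_algebraic_int_is_int by blast
qed

end

lemma sgn_twist_twice: "sgn_twist G J (sgn_twist G J E) = E"
  unfolding sgn_twist_def
  by (auto simp: power2_eq_square[symmetric] power_mult[symmetric] mult.assoc[symmetric]
      simp flip: power_add mult_2)

lemma clen_one:
  "clen G S \<one>\<^bsub>G\<^esub> = 0"
  unfolding clen_def by (rule Least_eq_0) (auto intro!: bexI[of _ "[]"] simp: wprod_def)

lemma clen_generator:
  assumes cox: "coxeter_system G S" and r: "r \<in> S"
  shows "clen G S r = 1"
  unfolding clen_def
proof (rule Least_equality)
  have "group G" "r \<in> carrier G" using r cox unfolding coxeter_system_def by auto
  then show "\<exists>ws\<in>lists S. length ws = 1 \<and> wprod G ws = r"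
    using r by (intro bexI[of _ "[r]"]) (auto simp: wprod_def group.is_monoid)
next
  fix y assume "\<exists>ws\<in>lists S. length ws = y \<and> wprod G ws = r"
  then show "1 \<le> y" using cox r unfolding coxeter_system_def by (cases y) (auto simp: wprod_def)
qed

lemma refl_class_rep:
  assumes cox: "coxeter_system G S" and C: "C \<in> refl_classes G S"
  shows "class_rep S C \<in> S" "class_rep S C \<in> C"
    and "\<exists>t\<in>carrier G. C = conj_class G (carrier G) t"
proof -
  have grp: "group G" and SG: "S \<subseteq> carrier G" and parS: "parab G S = carrier G"
    using cox unfolding coxeter_system_def by auto
  interpret G: group G by (rule grp)
  obtain w s0 where w: "w \<in> carrier G" "s0 \<in> S" and Cd: "C = conj_class G (carrier G) (w \<otimes>\<^bsub>G\<^esub> s0 \<otimes>\<^bsub>G\<^esub> inv\<^bsub>G\<^esub> w)"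
    using C parS unfolding refl_classes_def reflections_def by auto
  have s0c: "s0 \<in> carrier G" using w SG by auto
  have "s0 = inv\<^bsub>G\<^esub> w \<otimes>\<^bsub>G\<^esub> (w \<otimes>\<^bsub>G\<^esub> s0 \<otimes>\<^bsub>G\<^esub> inv\<^bsub>G\<^esub> w) \<otimes>\<^bsub>G\<^esub> inv\<^bsub>G\<^esub> (inv\<^bsub>G\<^esub> w)"
    using w s0c by (simp add: G.m_assoc[symmetric]) (simp add: G.m_assoc)
  then have "s0 \<in> C" unfolding Cd conj_class_def using w by blast
  then have "\<exists>s. s \<in> S \<and> s \<in> C" using w by blast
  then show "class_rep S C \<in> S" "class_rep S C \<in> C"
    unfolding class_rep_def by (metis (mono_tags, lifting) someI_ex)+
  show "\<exists>t\<in>carrier G. C = conj_class G (carrier G) t" using Cd w s0c by auto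
qed

lemma zmul_neg: "zmul (- k) x = - zmul k x"
  unfolding zmul_def by auto

lemma the_of_int_eq: "of_int k = (z :: complex) \<Longrightarrow> (THE k. of_int k = z) = k"
  by (rule the_equality) auto

lemma omega_coefficient_int:
  assumes cox: "coxeter_system G S" and fin: "finite (carrier G)"
    and E: "E \<in> Irr G (carrier G)" and C: "C \<in> refl_classes G S"
  shows "\<exists>k. of_nat (card C) * E (class_rep S C) / E \<one>\<^bsub>G\<^esub> = of_int k"
proof -
  have grp: "group G" and SG: "S \<subseteq> carrier G"
    and invol: "\<forall>s\<in>S. s \<otimes>\<^bsub>G\<^esub> s = \<one>\<^bsub>G\<^esub>"
    using cox unfolding coxeter_system_def by auto
  obtain n \<rho> where irr: "is_irrep G (carrier G) n \<rho>" and Ed: "E = character (carrier G) \<rho>"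
    using E by (rule Irr_E)
  obtain t where t: "t \<in> carrier G" and Cd: "C = conj_class G (carrier G) t"
    using refl_class_rep(3)[OF cox C] by blast
  define r where "r = class_rep S C"
  have r: "r \<in> S" "r \<in> C" using refl_class_rep(1,2)[OF cox C] unfolding r_def by auto
  have "of_nat (card C) * mtrace (\<rho> r) / of_nat n \<in> \<int>"
    using group.class_coefficient_int[OF grp fin irr t] r invol Cd by auto
  moreover have "E \<one>\<^bsub>G\<^esub> = of_nat n" "E r = mtrace (\<rho> r)"
    using irr r SG grp unfolding Ed character_def is_irrep_def is_rep_def
    by (auto simp: mtrace_def group.is_monoid)
  ultimately show ?thesis unfolding r_def[symmetric] by (auto elim: Ints_cases)
qed

text \<open>\<open>\<omega>\<^sub>L(E \<otimes> sgn) = -\<omega>\<^sub>L(E)\<close>: twisting by the sign negates the character at every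
  simple reflection and fixes the degree, so every (integral) coefficient changes sign.\<close>
lemma omega_sgn:
  assumes cox: "coxeter_system G S" and fin: "finite (carrier G)" and E: "E \<in> Irr G (carrier G)"
  shows "omegaL G L S (sgn_twist G S E) = - omegaL G L S E"
proof -
  have coeff: "zmul (THE k::int. of_int k = of_nat (card C) * sgn_twist G S E (class_rep S C)
        / sgn_twist G S E \<one>\<^bsub>G\<^esub>) (L (class_rep S C))
      = - zmul (THE k::int. of_int k = of_nat (card C) * E (class_rep S C) / E \<one>\<^bsub>G\<^esub>)
        (L (class_rep S C))"
    if C: "C \<in> refl_classes G S" for C
  proof -
    define r where "r = class_rep S C"
    obtain k where k: "of_nat (card C) * E r / E \<one>\<^bsub>G\<^esub> = of_int k"
      using omega_coefficient_int[OF cox fin E C] unfolding r_def by blast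
    have "sgn_twist G S E r = - E r" "sgn_twist G S E \<one>\<^bsub>G\<^esub> = E \<one>\<^bsub>G\<^esub>"
      unfolding sgn_twist_def r_def using clen_generator[OF cox refl_class_rep(1)[OF cox C]]
      by (auto simp: clen_one)
    then have "of_nat (card C) * sgn_twist G S E r / sgn_twist G S E \<one>\<^bsub>G\<^esub> = of_int (- k)"
      using k by (simp add: minus_divide_left)
    from the_of_int_eq[OF this[symmetric]] the_of_int_eq[OF k[symmetric]]
    show ?thesis unfolding r_def[symmetric] by (simp add: zmul_neg)
  qed
  show ?thesis unfolding omegaL_def sum_negf[symmetric] by (rule sum.cong) (auto simp: coeff)
qed

subsection \<open>The recursion defining \<open>\<tilde>a\<close>\<close>

lemma set_cong_psubset:
  assumes "\<And>K M. K \<subset> J \<Longrightarrow> f K M = g K M"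
  shows "{f K M | K M. K \<subset> J \<and> Q K M} = {g K M | K M. K \<subset> J \<and> Q K M}"
  using assms by metis

lemma atilde_aux_indep:
  "finite K \<Longrightarrow> card K \<le> n \<Longrightarrow> card K \<le> m \<Longrightarrow> atilde_aux G L n K E = atilde_aux G L m K E"
proof (induction n arbitrary: m K E)
  case 0
  then have "K = {}" by auto
  then show ?case by (cases m) auto
next
  case (Suc n)
  show ?case
  proof (cases "K = {}")
    case True
    then show ?thesis by (cases m) auto
  next
    case False
    with Suc.prems obtain m' where m: "m = Suc m'" by (cases m) auto
    have eq: "atilde_aux G L n K' M = atilde_aux G L m' K' M" if "K' \<subset> K" for K' M
    proof -
      have "finite K'" "card K' < card K"
        using that Suc.prems by (auto intro: finite_subset psubset_card_mono)
      then show ?thesis using Suc.IH[of K' m' M] Suc.prems m by auto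
    qed
    show ?thesis unfolding m atilde_aux.simps by (simp only: set_cong_psubset[OF eq])
  qed
qed

lemma atilde_max:
  assumes "finite J" "J \<noteq> {}"
  shows "atilde G L J E = max (atilde' G L J E) (atilde' G L J (sgn_twist G J E) - omegaL G L J E)"
proof -
  obtain n where n: "card J = Suc n" using assms by (cases "card J") auto
  have eq: "atilde_aux G L n K M = atilde G L K M" if "K \<subset> J" for K M
  proof -
    have "finite K" "card K < card J" using that assms by (auto intro: finite_subset psubset_card_mono)
    then show ?thesis unfolding atilde_def using atilde_aux_indep[of K n "card K"] n by auto
  qed
  have "atilde G L J E = (if atilde' G L J (sgn_twist G J E) - atilde' G L J E \<le> omegaL G L J E
      then atilde' G L J E else atilde' G L J (sgn_twist G J E) - omegaL G L J E)"
    unfolding atilde_def n atilde_aux.simps using assms(2)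
    by (simp only: set_cong_psubset[OF eq] atilde_def[symmetric] atilde'_def[symmetric]
        n[symmetric] Let_def if_False)
  then show ?thesis by (auto simp: max_def le_diff_eq diff_le_eq add.commute)
qed

text \<open>If \<open>\<omega>\<^sub>L(E \<otimes> sgn) = -\<omega>\<^sub>L(E)\<close> then \<open>\<tilde>a\<^sub>E\<^sub>\<otimes>\<^sub>s\<^sub>g\<^sub>n - \<tilde>a\<^sub>E = \<omega>\<^sub>L(E)\<close>: both are maxima of the
  same two numbers \<open>\<tilde>a'\<^sub>E\<close>, \<open>\<tilde>a'\<^sub>E\<^sub>\<otimes>\<^sub>s\<^sub>g\<^sub>n - \<omega>\<^sub>L(E)\<close>, the first shifted by \<open>\<omega>\<^sub>L(E)\<close>.\<close>
lemma atilde_sgn_diff: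
  assumes "finite J" "J \<noteq> {}" and omega: "omegaL G L J (sgn_twist G J E) = - omegaL G L J E"
  shows "atilde G L J (sgn_twist G J E) - atilde G L J E = omegaL G L J E"
proof -
  have "atilde G L J (sgn_twist G J E) =
      max (atilde' G L J (sgn_twist G J E)) (atilde' G L J E + omegaL G L J E)"
    using atilde_max[OF assms(1,2), of G L "sgn_twist G J E"] omega by (simp add: sgn_twist_twice)
  also have "\<dots> = max (atilde' G L J E) (atilde' G L J (sgn_twist G J E) - omegaL G L J E)
      + omegaL G L J E"
    by (simp add: max_add_distrib_left max.commute)
  also have "\<dots> = atilde G L J E + omegaL G L J E"
    using atilde_max[OF assms(1,2), of G L E] by simp
  finally show ?thesis by simp
qed

definition candidates :: "('a, 'b) monoid_scheme \<Rightarrow> ('a \<Rightarrow> 'g::linordered_ab_group_add) \<Rightarrow>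
    'a set \<Rightarrow> ('a \<Rightarrow> complex) \<Rightarrow> 'g set" where
  "candidates G L J E = {atilde G L K M | K M.
      K \<subset> J \<and> M \<in> Irr G (parab G K) \<and> constituent G (parab G K) (parab G J) M E}"

lemma atilde'_candidates: "atilde' G L J E = Max (candidates G L J E)"
  unfolding atilde'_def candidates_def ..

text \<open>There are finitely many candidates, as there are finitely many \<open>K \<subseteq> J\<close> and each
  \<open>Irr(W\<^sub>K)\<close> is finite; so \<open>Max\<close> is a genuine maximum.\<close>
lemma candidates_finite:
  assumes cox: "coxeter_system G S" and fin: "finite (carrier G)" and J: "J \<subseteq> S"
  shows "finite (candidates G L J E)"
proof -
  have grp: "group G" and SG: "S \<subseteq> carrier G" using cox unfolding coxeter_system_def by auto
  have fJ: "finite J" using J SG fin by (meson finite_subset)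
  have "finite (Irr G (parab G K))" if "K \<subseteq> J" for K
    using that J SG by (intro Irr_finite[OF grp fin] group.generate_is_subgroup[OF grp]) auto
  then have "finite (SIGMA K:Pow J. Irr G (parab G K))" using fJ by (intro finite_SigmaI) auto
  moreover have "candidates G L J E \<subseteq> (\<lambda>(K,M). atilde G L K M) ` (SIGMA K:Pow J. Irr G (parab G K))"
    unfolding candidates_def by auto
  ultimately show ?thesis by (meson finite_imageI finite_subset)
qed

lemma irrep_trivial: "is_irrep G {\<one>\<^bsub>G\<^esub>} 1 (\<lambda>_. 1\<^sub>m 1)"
  unfolding is_irrep_def is_rep_def
proof (intro conjI allI impI ballI)
  fix U assume U: "is_subspace 1 U \<and> (\<forall>h\<in>{\<one>\<^bsub>G\<^esub>}. \<forall>u\<in>U. 1\<^sub>m 1 *\<^sub>v u \<in> U)"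
  show "U = {0\<^sub>v 1} \<or> U = carrier_vec 1"
  proof (cases "U \<subseteq> {0\<^sub>v 1}")
    case True
    then show ?thesis using U unfolding is_subspace_def by auto
  next
    case False
    then obtain u where u: "u \<in> U" "u \<noteq> 0\<^sub>v 1" by auto
    have uc: "u \<in> carrier_vec 1" using U u unfolding is_subspace_def by auto
    then have u0: "u $ 0 \<noteq> 0" using u(2) by (metis eq_vecI carrier_vecD index_zero_vec less_one)
    have "v \<in> U" if v: "v \<in> carrier_vec 1" for v
    proof -
      have "v = (v $ 0 / u $ 0) \<cdot>\<^sub>v u" using v uc u0 by (intro eq_vecI) auto
      then show ?thesis using U u unfolding is_subspace_def by metis
    qed
    then show ?thesis using U unfolding is_subspace_def by auto
  qed
qed auto

text \<open>Every irreducible \<open>E\<close> is a constituent of the regular representation, i.e. of the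
  representation induced from the trivial representation of the trivial subgroup:
  the multiplicity is \<open>\<chi>\<^sub>E(1) \<noteq> 0\<close>.\<close>
lemma regular_constituent:
  assumes grp: "group G" and fin: "finite (carrier G)" and E: "E \<in> Irr G (carrier G)"
  shows "constituent G {\<one>\<^bsub>G\<^esub>} (carrier G) (character {\<one>\<^bsub>G\<^esub>} (\<lambda>_. 1\<^sub>m 1)) E"
proof -
  interpret G: group G by (rule grp)
  define M where "M = character {\<one>\<^bsub>G\<^esub>} (\<lambda>_. 1\<^sub>m 1)"
  obtain n \<rho> where irr: "is_irrep G (carrier G) n \<rho>" and Ed: "E = character (carrier G) \<rho>"
    using E by (rule Irr_E)
  have E1: "E \<one>\<^bsub>G\<^esub> = of_nat n" "n > 0"
    using irr unfolding Ed character_def is_irrep_def is_rep_def by auto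
  have ind: "ind_char G {\<one>\<^bsub>G\<^esub>} (carrier G) M g = (if g = \<one>\<^bsub>G\<^esub> then of_nat (card (carrier G)) else 0)"
    if g: "g \<in> carrier G" for g
  proof -
    have "(x \<otimes>\<^bsub>G\<^esub> g \<otimes>\<^bsub>G\<^esub> inv\<^bsub>G\<^esub> x = \<one>\<^bsub>G\<^esub>) = (g = \<one>\<^bsub>G\<^esub>)" if "x \<in> carrier G" for x
      using g that by (metis G.inv_closed G.inv_solve_right G.m_closed G.r_inv G.r_one G.l_one
          G.l_cancel_one)
    then show ?thesis using g unfolding ind_char_def M_def character_def by (auto simp: mtrace_def)
  qed
  have "(\<Sum>g\<in>carrier G. ind_char G {\<one>\<^bsub>G\<^esub>} (carrier G) M g * cnj (E g))
      = (\<Sum>g\<in>carrier G. if g = \<one>\<^bsub>G\<^esub> then of_nat (card (carrier G)) * cnj (E g) else 0)"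
    by (rule sum.cong) (auto simp: ind)
  also have "\<dots> = of_nat (card (carrier G)) * cnj (E \<one>\<^bsub>G\<^esub>)" using fin by (simp add: sum.delta)
  finally have "char_inner (carrier G) (ind_char G {\<one>\<^bsub>G\<^esub>} (carrier G) M) E = cnj (E \<one>\<^bsub>G\<^esub>)"
    unfolding char_inner_def using fin by (auto simp: card_gt_0_iff)
  then show ?thesis unfolding constituent_def M_def[symmetric] using E1 by simp
qed

text \<open>Hence \<open>0 = \<tilde>a\<close> of the trivial representation of \<open>W\<^sub>\<emptyset>\<close> is a candidate for every \<open>\<tilde>a'\<^sub>E\<close>.\<close>
lemma zero_candidate:
  assumes cox: "coxeter_system G S" and fin: "finite (carrier G)" and S: "S \<noteq> {}"
    and E: "E \<in> Irr G (carrier G)"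
  shows "(0::'g::linordered_ab_group_add) \<in> candidates G L S E"
proof -
  have grp: "group G" and parS: "parab G S = carrier G" using cox unfolding coxeter_system_def by auto
  have p0: "parab G {} = {\<one>\<^bsub>G\<^esub>}" by (rule group.generate_empty[OF grp])
  define M where "M = character {\<one>\<^bsub>G\<^esub>} (\<lambda>_. 1\<^sub>m 1)"
  have "M \<in> Irr G (parab G {})" unfolding p0 M_def Irr_def using irrep_trivial by blast
  moreover have "constituent G (parab G {}) (parab G S) M E"
    unfolding parS p0 M_def by (rule regular_constituent[OF grp fin E])
  moreover have "atilde G L {} M = 0" unfolding atilde_def by simp
  ultimately show ?thesis using S unfolding candidates_def
    by (intro CollectI exI[of _ "{}"] exI[of _ M]) auto
qed

lemma omegaL_empty: "omegaL G L {} E = 0"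
  unfolding omegaL_def refl_classes_def reflections_def by simp

theorem mainTheorem4:
  fixes G :: "('a, 'b) monoid_scheme" and S :: "'a set"
    and L :: "'a \<Rightarrow> 'g::linordered_ab_group_add"
  assumes cox: "coxeter_system G S"
    and fin: "finite (carrier G)"
    and wt: "weight_function G S L"
    and pos: "\<forall>s\<in>S. 0 \<le> L s"
  shows "(\<forall>E\<in>Irr G (carrier G).
            (S \<noteq> {} \<longrightarrow> atilde' G L S E \<le> atilde G L S E \<and> 0 \<le> atilde' G L S E) \<and>
            atilde G L S (sgn_twist G S E) - atilde G L S E = omegaL G L S E)
       \<and> (\<forall>J M E. J \<subset> S \<longrightarrow> M \<in> Irr G (parab G J) \<longrightarrow> E \<in> Irr G (carrier G) \<longrightarrow>
            constituent G (parab G J) (carrier G) M E \<longrightarrow> atilde G L J M \<le> atilde G L S E)"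
proof -
  have finS: "finite S" and parS: "parab G S = carrier G"
    using cox fin unfolding coxeter_system_def by (auto intro: finite_subset)
  have le: "atilde' G L S E \<le> atilde G L S E" if "S \<noteq> {}" for E
    unfolding atilde_max[OF finS that] by (rule max.cobounded1)
  have nonneg: "0 \<le> atilde' G L S E" if "S \<noteq> {}" "E \<in> Irr G (carrier G)" for E
    unfolding atilde'_candidates
    using candidates_finite[OF cox fin order_refl] zero_candidate[OF cox fin that] by (rule Max_ge)
  have sgn: "atilde G L S (sgn_twist G S E) - atilde G L S E = omegaL G L S E"
    if "E \<in> Irr G (carrier G)" for E
  proof (cases "S = {}")
    case True
    then show ?thesis by (simp add: atilde_def omegaL_empty)
  qed (rule atilde_sgn_diff[OF finS _ omega_sgn[OF cox fin that]])
  have induced: "atilde G L J M \<le> atilde G L S E"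
    if "J \<subset> S" "M \<in> Irr G (parab G J)" "constituent G (parab G J) (carrier G) M E" for J M E
  proof -
    have "atilde G L J M \<le> atilde' G L S E"
      unfolding atilde'_candidates using that parS
      by (intro Max_ge[OF candidates_finite[OF cox fin order_refl]]) (auto simp: candidates_def)
    also have "\<dots> \<le> atilde G L S E" using le that(1) by blast
    finally show ?thesis .
  qed
  show ?thesis using le nonneg sgn induced by blast
qed

end
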